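(* Let $S=\{R_0,R_1,\ldots,R_d\}$ be a quasi-thin scheme on $X$, let $\mathbb{F}$ be a field and $x\in X$, and let $\mathcal{T}=\mathcal{T}(x)$ be the Terwilliger $\mathbb{F}$-algebra of $S$ with respect to $x$. Then $$\dim_{\mathbb{F}}\mathcal{T}=(d+1)^2+\bigl|\{(a,b): R_a,R_b\in S,\ |R_{a'}R_b|=2\}\bigr|+\bigl|\{(c,e): R_c,R_e\in S,\ (c,e)\text{ is a bad pair of }S\}\bigr|.$$
   Context: Let $\mathbb{F}$ be a field of characteristic $p$ ($p=0$ or a prime) and $X$ a nonempty finite set. A scheme (association scheme) of class $d$ on $X$ is a partition $S=\{R_0,\dots,R_d\}$ of $X\times X$ into nonempty sets such that $R_0=\{(b,b):b\in X\}$; for each $c$ there is $c'$ with $R_{c'}=\{(f,e):(e,f)\in R_c\}$; and for all $i,j,k$ the intersection number $p_{ij}^k=|\{\ell\in X:(m,\ell)\in R_i,(\ell,n)\in R_j\}|$ does not depend on the choice of $(m,n)\in R_k$. The valency of $R_a$ is $k_a=p_{aa'}^0$. The complex product of $R_a,R_b$ is $R_aR_b=\{R_c\in S:p_{ab}^c>0\}$. $S$ is quasi-thin if $k_a\le 2$ for all $a$. For $y\in X$, $yR_a=\{z\in X:(y,z)\in R_a\}$. $M_X(\mathbb F)$ denotes the $\mathbb F$-matrices with rows and columns indexed by $X$; $E_{uv}$ is the matrix unit at $(u,v)$. $A_a$ is the $(0,1)$ adjacency matrix of $R_a$, and $E_a^*(y)=\sum_{i\in yR_a}E_{ii}$. The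 Terwilliger $\mathbb F$-algebra $\mathcal T(y)$ is the $\mathbb F$-subalgebra of $M_X(\mathbb F)$ generated by $A_0,\dots,A_d,E_0^*(y),\dots,E_d^*(y)$. Bad pair: for $R_u,R_v\in S$, $(u,v)$ is a bad pair of $S$ if there exist an integer $a\ge 1$ and $R_{i_b},R_{j_b},R_{\ell_b}\in S$ for $b=0,\dots,a$ such that $i_0=u$, $\ell_a=v$, $k_{i_b}=k_{\ell_b}=2$ and $p_{i_bj_b}^{\ell_b}=1$ for all $b\in\{0,\dots,a\}$, $\ell_c=i_{c+1}$ for all $c\in\{0,\dots,a-1\}$, and $|R_{u'}R_v|=1$. *)

theory Defs
  imports Complex_Main "HOL-Library.Function_Algebras"
begin

text \<open>The point set X is modelled by a finite type 'x (X = UNIV, automatically nonempty).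
  A scheme of class d is given by R :: nat => ('x * 'x) set, with relations R 0, ..., R d.\<close>

definition pcount :: "(nat \<Rightarrow> ('x \<times> 'x) set) \<Rightarrow> nat \<Rightarrow> nat \<Rightarrow> 'x \<Rightarrow> 'x \<Rightarrow> nat" where
  "pcount R i j m n = card {l. (m, l) \<in> R i \<and> (l, n) \<in> R j}"

definition is_scheme :: "(nat \<Rightarrow> ('x::finite \<times> 'x) set) \<Rightarrow> nat \<Rightarrow> bool" where
  "is_scheme R d \<longleftrightarrow>
     (\<forall>c\<le>d. R c \<noteq> {}) \<and>
     (\<forall>z. \<exists>!c. c \<le> d \<and> z \<in> R c) \<and>
     R 0 = {(b, b) | b. True} \<and>
     (\<forall>c\<le>d. \<exists>c'\<le>d. R c' = {(f, e). (e, f) \<in> R c}) \<and>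
     (\<forall>i\<le>d. \<forall>j\<le>d. \<forall>k\<le>d. \<forall>m n m' n'. (m, n) \<in> R k \<longrightarrow> (m', n') \<in> R k \<longrightarrow>
        pcount R i j m n = pcount R i j m' n')"

text \<open>Intersection number p_{ij}^k (evaluated at some pair of R k).\<close>
definition inum :: "(nat \<Rightarrow> ('x \<times> 'x) set) \<Rightarrow> nat \<Rightarrow> nat \<Rightarrow> nat \<Rightarrow> nat" where
  "inum R i j k = (let z = (SOME z. z \<in> R k) in pcount R i j (fst z) (snd z))"

definition conv_idx :: "(nat \<Rightarrow> ('x \<times> 'x) set) \<Rightarrow> nat \<Rightarrow> nat \<Rightarrow> nat" where
  "conv_idx R d c = (THE c'. c' \<le> d \<and> R c' = {(f, e). (e, f) \<in> R c})"

definition valency :: "(nat \<Rightarrow> ('x \<times> 'x) set) \<Rightarrow> nat \<Rightarrow> nat \<Rightarrow> nat" where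
  "valency R d a = inum R a (conv_idx R d a) 0"

definition quasi_thin :: "(nat \<Rightarrow> ('x \<times> 'x) set) \<Rightarrow> nat \<Rightarrow> bool" where
  "quasi_thin R d \<longleftrightarrow> (\<forall>a\<le>d. valency R d a \<le> 2)"

text \<open>Complex product R_a R_b, as a set of indices.\<close>
definition cprod :: "(nat \<Rightarrow> ('x \<times> 'x) set) \<Rightarrow> nat \<Rightarrow> nat \<Rightarrow> nat \<Rightarrow> nat set" where
  "cprod R d a b = {c. c \<le> d \<and> inum R a b c > 0}"

definition bad_pair :: "(nat \<Rightarrow> ('x \<times> 'x) set) \<Rightarrow> nat \<Rightarrow> nat \<Rightarrow> nat \<Rightarrow> bool" where
  "bad_pair R d u v \<longleftrightarrow>
     (\<exists>a::nat. \<exists>i j l :: nat \<Rightarrow> nat. a \<ge> 1 \<and>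
        (\<forall>b\<le>a. i b \<le> d \<and> j b \<le> d \<and> l b \<le> d) \<and>
        i 0 = u \<and> l a = v \<and>
        (\<forall>b\<le>a. valency R d (i b) = 2 \<and> valency R d (l b) = 2 \<and> inum R (i b) (j b) (l b) = 1) \<and>
        (\<forall>c<a. l c = i (c + 1))) \<and>
     card (cprod R d (conv_idx R d u) v) = 1"

text \<open>Matrices in M_X(F) are functions 'x => 'x => 'f.\<close>
definition mmult :: "('x::finite \<Rightarrow> 'x \<Rightarrow> 'f::field) \<Rightarrow> ('x \<Rightarrow> 'x \<Rightarrow> 'f) \<Rightarrow> ('x \<Rightarrow> 'x \<Rightarrow> 'f)" where
  "mmult M N = (\<lambda>i k. \<Sum>j\<in>UNIV. M i j * N j k)"

definition mscale :: "'f::field \<Rightarrow> ('x \<Rightarrow> 'x \<Rightarrow> 'f) \<Rightarrow> ('x \<Rightarrow> 'x \<Rightarrow> 'f)" where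
  "mscale c M = (\<lambda>i j. c * M i j)"

definition adj_mat :: "(nat \<Rightarrow> ('x \<times> 'x) set) \<Rightarrow> nat \<Rightarrow> ('x \<Rightarrow> 'x \<Rightarrow> 'f::field)" where
  "adj_mat R a = (\<lambda>u v. if (u, v) \<in> R a then 1 else 0)"

definition dual_idem :: "(nat \<Rightarrow> ('x \<times> 'x) set) \<Rightarrow> 'x \<Rightarrow> nat \<Rightarrow> ('x \<Rightarrow> 'x \<Rightarrow> 'f::field)" where
  "dual_idem R y a = (\<lambda>u v. if u = v \<and> (y, u) \<in> R a then 1 else 0)"

inductive_set gen_alg :: "('x::finite \<Rightarrow> 'x \<Rightarrow> 'f::field) set \<Rightarrow> ('x \<Rightarrow> 'x \<Rightarrow> 'f) set"
  for G where
  gen: "M \<in> G \<Longrightarrow> M \<in> gen_alg G"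
| one: "(\<lambda>i j. if i = j then 1 else 0) \<in> gen_alg G"
| add: "M \<in> gen_alg G \<Longrightarrow> N \<in> gen_alg G \<Longrightarrow> M + N \<in> gen_alg G"
| scale: "M \<in> gen_alg G \<Longrightarrow> mscale c M \<in> gen_alg G"
| mult: "M \<in> gen_alg G \<Longrightarrow> N \<in> gen_alg G \<Longrightarrow> mmult M N \<in> gen_alg G"

definition terwilliger :: "(nat \<Rightarrow> ('x::finite \<times> 'x) set) \<Rightarrow> nat \<Rightarrow> 'x \<Rightarrow> ('x \<Rightarrow> 'x \<Rightarrow> 'f::field) set" where
  "terwilliger R d y = gen_alg ({adj_mat R a | a. a \<le> d} \<union> {dual_idem R y a | a. a \<le> d})"

definition fdim :: "('x::finite \<Rightarrow> 'x \<Rightarrow> 'f::field) set \<Rightarrow> nat" where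
  "fdim V = vector_space.dim (mscale :: 'f \<Rightarrow> _) V"

end

(*
  Write X_a = x R_a. By quasi-thinness every cell X_a has one or two points, and
  E*_a A_c E*_b is the indicator matrix of the block R_c \<inter> X_a \<times> X_b. Its row and
  column sums are constant (they are intersection numbers), so the block is empty, all of
  X_a \<times> X_b, or a perfect matching between two 2-point cells; the last case happens
  exactly when p_ac^b = 1 ("a thin step from a to b"). Composing matchings along walks of
  thin steps, T contains both perfect matchings X_a \<rightarrow> X_b whenever a and b are joined
  by such a walk. These matchings, together with the full blocks X_a \<times> X_b of all the other
  pairs (a, b), partition X \<times> X; their indicator matrices are closed under multiplication
  up to scalars, contain the generators of T, and are linearly independent. Hence dim T is
  (d + 1)^2 plus the number of pairs joined by a walk of thin steps, and these pairs are
  exactly those with |R_a' R_b| = 2 together with the bad pairs.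
*)
theory Submission
  imports Defs
begin

section \<open>Matrices indexed by a finite type\<close>

global_interpretation mspace: vector_space "mscale :: 'f::field \<Rightarrow> ('x \<Rightarrow> 'x \<Rightarrow> 'f) \<Rightarrow> _"
  by unfold_locales (auto simp: mscale_def fun_eq_iff ring_distribs)

lemma fdim_eq_dim: "fdim V = mspace.dim V"
  unfolding fdim_def ..

lemma sum_apply: "sum f A u = (\<Sum>a\<in>A. f a u)"
  by (induction A rule: infinite_finite_induct) auto

lemma mmult_add_left: "mmult (M + N) P = mmult M P + mmult N (P :: 'x::finite \<Rightarrow> 'x \<Rightarrow> 'f::field)"
  unfolding mmult_def by (simp add: fun_eq_iff ring_distribs sum.distrib)

lemma mmult_add_right: "mmult P (M + N) = mmult P M + mmult P (N :: 'x::finite \<Rightarrow> 'x \<Rightarrow> 'f::field)"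
  unfolding mmult_def by (simp add: fun_eq_iff ring_distribs sum.distrib)

lemma mmult_mscale_left: "mmult (mscale c M) P = mscale c (mmult M (P :: 'x::finite \<Rightarrow> 'x \<Rightarrow> 'f::field))"
  unfolding mmult_def mscale_def by (simp add: fun_eq_iff sum_distrib_left mult.assoc)

lemma mmult_mscale_right: "mmult P (mscale c M) = mscale c (mmult P (M :: 'x::finite \<Rightarrow> 'x \<Rightarrow> 'f::field))"
  unfolding mmult_def mscale_def by (simp add: fun_eq_iff sum_distrib_left mult.left_commute)

lemma mmult_zero_left: "mmult 0 (P :: 'x::finite \<Rightarrow> 'x \<Rightarrow> 'f::field) = 0"
  unfolding mmult_def by (simp add: fun_eq_iff)

lemma mmult_zero_right: "mmult P (0 :: 'x::finite \<Rightarrow> 'x \<Rightarrow> 'f::field) = 0"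
  unfolding mmult_def by (simp add: fun_eq_iff)

lemma mmult_mem_span:
  fixes B :: "('x::finite \<Rightarrow> 'x \<Rightarrow> 'f::field) set"
  assumes closed: "\<And>M N. M \<in> B \<Longrightarrow> N \<in> B \<Longrightarrow> mmult M N \<in> mspace.span B"
    and "M \<in> mspace.span B" "N \<in> mspace.span B"
  shows "mmult M N \<in> mspace.span B"
proof -
  have left: "mmult M' N \<in> mspace.span B" if "M' \<in> B" for M'
    using \<open>N \<in> mspace.span B\<close>
  proof (induction rule: mspace.span_induct_alt)
    case (step c N1 N2)
    show ?case
      unfolding mmult_add_right mmult_mscale_right
      by (rule mspace.span_add[OF mspace.span_scale[OF closed[OF that step(1)]] step(2)])
  qed (simp only: mmult_zero_right mspace.span_zero)
  from \<open>M \<in> mspace.span B\<close> show ?thesis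
  proof (induction rule: mspace.span_induct_alt)
    case (step c M1 M2)
    show ?case
      unfolding mmult_add_left mmult_mscale_left
      by (rule mspace.span_add[OF mspace.span_scale[OF left[OF step(1)]] step(2)])
  qed (simp only: mmult_zero_left mspace.span_zero)
qed

definition ind_mat :: "('x \<times> 'x) set \<Rightarrow> 'x \<Rightarrow> 'x \<Rightarrow> 'f::zero_neq_one" where
  "ind_mat F = (\<lambda>u v. if (u, v) \<in> F then 1 else 0)"

lemma ind_mat_apply: "ind_mat F u v = (if (u, v) \<in> F then 1 else 0)"
  unfolding ind_mat_def ..

lemma ind_mat_empty [simp]: "ind_mat {} = 0"
  by (simp add: ind_mat_def fun_eq_iff)

lemma ind_mat_diff: "F \<subseteq> G \<Longrightarrow> ind_mat (G - F) = (ind_mat G - ind_mat F :: 'x \<Rightarrow> 'x \<Rightarrow> 'f::{zero_neq_one,group_add})"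
  by (auto simp: ind_mat_def fun_eq_iff)

lemma ind_mat_eq_iff: "(ind_mat F :: 'x \<Rightarrow> 'x \<Rightarrow> 'f::zero_neq_one) = ind_mat G \<longleftrightarrow> F = G"
  by (auto simp: ind_mat_def fun_eq_iff split: if_splits)

lemma mmult_ind_mat:
  "mmult (ind_mat F) (ind_mat G) = (\<lambda>u w. (of_nat (card {v. (u, v) \<in> F \<and> (v, w) \<in> G}) :: 'f::field))"
proof (intro ext)
  fix u w
  have "mmult (ind_mat F) (ind_mat G) u w
      = (\<Sum>v\<in>UNIV. if v \<in> {v. (u, v) \<in> F \<and> (v, w) \<in> G} then 1 else 0 :: 'f)"
    unfolding mmult_def ind_mat_def by (intro sum.cong) auto
  then show "mmult (ind_mat F) (ind_mat G) u w = (of_nat (card {v. (u, v) \<in> F \<and> (v, w) \<in> G}) :: 'f)"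
    by (simp add: sum.If_cases)
qed

lemma mmult_ind_mat_relcomp:
  assumes "\<And>u v v' w. (u, v) \<in> F \<Longrightarrow> (v, w) \<in> G \<Longrightarrow> (u, v') \<in> F \<Longrightarrow> (v', w) \<in> G \<Longrightarrow> v = v'"
  shows "mmult (ind_mat F) (ind_mat G) = (ind_mat (F O G) :: 'x::finite \<Rightarrow> 'x \<Rightarrow> 'f::field)"
proof (intro ext)
  fix u w
  show "mmult (ind_mat F) (ind_mat G) u w = (ind_mat (F O G) u w :: 'f)"
  proof (cases "(u, w) \<in> F O G")
    case True
    then obtain v where "(u, v) \<in> F" "(v, w) \<in> G"
      by blast
    with assms have middle: "{v. (u, v) \<in> F \<and> (v, w) \<in> G} = {v}"
      by blast
    from True show ?thesis
      unfolding mmult_ind_mat ind_mat_apply middle by simp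
  next
    case False
    then have middle: "{v. (u, v) \<in> F \<and> (v, w) \<in> G} = {}"
      by blast
    from False show ?thesis
      unfolding mmult_ind_mat ind_mat_apply middle by simp
  qed
qed

lemma mmult_ind_mat_times:
  "mmult (ind_mat (A \<times> B)) (ind_mat (B \<times> C)) = (mscale (of_nat (card B)) (ind_mat (A \<times> C)) :: 'x::finite \<Rightarrow> 'x \<Rightarrow> 'f::field)"
proof -
  have "\<And>u w. {v. (u, v) \<in> A \<times> B \<and> (v, w) \<in> B \<times> C} = (if u \<in> A \<and> w \<in> C then B else {})"
    by auto
  then show ?thesis
    unfolding mmult_ind_mat by (simp add: ind_mat_def mscale_def fun_eq_iff)
qed

lemma ind_mat_eq_sum_partition:
  assumes "finite I" and partition: "\<And>z. \<exists>!i. i \<in> I \<and> z \<in> P i"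
  shows "ind_mat F = (\<Sum>i\<in>I. ind_mat (P i \<inter> F) :: 'x \<Rightarrow> 'x \<Rightarrow> 'f::field)"
proof (intro ext)
  fix u v
  obtain i0 where i0: "i0 \<in> I" "(u, v) \<in> P i0"
    and unique: "\<And>i. i \<in> I \<Longrightarrow> (u, v) \<in> P i \<Longrightarrow> i = i0"
    using partition[of "(u, v)"] by blast
  have "(\<Sum>i\<in>I. ind_mat (P i \<inter> F) :: 'x \<Rightarrow> 'x \<Rightarrow> 'f) u v = (\<Sum>i\<in>I. ind_mat (P i \<inter> F) u v)"
    by (simp add: sum_apply)
  also have "\<dots> = ind_mat (P i0 \<inter> F) u v"
    using unique by (simp add: sum.remove[OF assms(1) i0(1)] ind_mat_apply, intro sum.neutral) auto
  also have "\<dots> = ind_mat F u v"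
    using i0(2) by (simp add: ind_mat_apply)
  finally show "ind_mat F u v = (\<Sum>i\<in>I. ind_mat (P i \<inter> F) :: 'x \<Rightarrow> 'x \<Rightarrow> 'f) u v" ..
qed

lemma independent_ind_mat:
  fixes \<P> :: "('x::finite \<times> 'x) set set"
  assumes "pairwise disjnt \<P>" and "{} \<notin> \<P>"
  shows "mspace.independent (ind_mat ` \<P> :: ('x \<Rightarrow> 'x \<Rightarrow> 'f::field) set)"
proof (rule mspace.independent_if_scalars_zero)
  show fin: "finite (ind_mat ` \<P> :: ('x \<Rightarrow> 'x \<Rightarrow> 'f) set)"
    by simp
  fix c :: "('x \<Rightarrow> 'x \<Rightarrow> 'f) \<Rightarrow> 'f" and M :: "'x \<Rightarrow> 'x \<Rightarrow> 'f"
  assume lin: "(\<Sum>M\<in>ind_mat ` \<P>. mscale (c M) M) = 0" and M: "M \<in> ind_mat ` \<P>"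
  then obtain F where F: "F \<in> \<P>" "M = ind_mat F"
    by blast
  with assms(2) have "F \<noteq> {}"
    by blast
  then obtain u v where uv: "(u, v) \<in> F"
    by auto
  have others: "N u v = 0" if "N \<in> ind_mat ` \<P> - {M}" for N
  proof -
    from that obtain G where G: "G \<in> \<P>" "N = ind_mat G" "G \<noteq> F"
      using F by blast
    with F(1) uv assms(1) have "(u, v) \<notin> G"
      unfolding pairwise_def disjnt_def by blast
    with G show ?thesis
      by (simp add: ind_mat_apply)
  qed
  have "0 = (\<Sum>N\<in>ind_mat ` \<P>. c N * N u v)"
    using arg_cong[OF lin, of "\<lambda>M. M u v"] by (simp add: sum_apply mscale_def)
  also have "\<dots> = c M * M u v"
    using others by (simp add: sum.remove[OF fin M] sum.neutral)
  finally show "c M = 0"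
    using F uv by (simp add: ind_mat_apply)
qed

lemma dim_span_ind_mat:
  fixes \<P> :: "('x::finite \<times> 'x) set set"
  assumes "pairwise disjnt \<P>" and "{} \<notin> \<P>"
  shows "mspace.dim (mspace.span (ind_mat ` \<P> :: ('x \<Rightarrow> 'x \<Rightarrow> 'f::field) set)) = card \<P>"
proof -
  have inj: "inj_on (ind_mat :: _ \<Rightarrow> 'x \<Rightarrow> 'x \<Rightarrow> 'f) \<P>"
    by (rule inj_onI) (simp add: ind_mat_eq_iff)
  then show ?thesis
    using mspace.dim_eq_card_independent[OF independent_ind_mat[OF assms, where 'f = 'f]]
    by (simp add: card_image[OF inj])
qed

section \<open>Relations that are bijections\<close>

definition bij_rel :: "('a \<times> 'b) set \<Rightarrow> 'a set \<Rightarrow> 'b set \<Rightarrow> bool" where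
  "bij_rel F A B \<longleftrightarrow> F \<subseteq> A \<times> B \<and> (\<forall>u\<in>A. \<exists>!v. (u, v) \<in> F) \<and> (\<forall>v\<in>B. \<exists>!u. (u, v) \<in> F)"

lemma bij_rel_subset: "bij_rel F A B \<Longrightarrow> F \<subseteq> A \<times> B"
  unfolding bij_rel_def by blast

lemma bij_rel_ex_right: "bij_rel F A B \<Longrightarrow> u \<in> A \<Longrightarrow> \<exists>v. (u, v) \<in> F"
  unfolding bij_rel_def by blast

lemma bij_rel_ex_left: "bij_rel F A B \<Longrightarrow> v \<in> B \<Longrightarrow> \<exists>u. (u, v) \<in> F"
  unfolding bij_rel_def by blast

lemma bij_rel_right_unique: "bij_rel F A B \<Longrightarrow> (u, v) \<in> F \<Longrightarrow> (u, v') \<in> F \<Longrightarrow> v = v'"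
  unfolding bij_rel_def by blast

lemma bij_rel_left_unique: "bij_rel F A B \<Longrightarrow> (u, v) \<in> F \<Longrightarrow> (u', v) \<in> F \<Longrightarrow> u = u'"
  unfolding bij_rel_def by blast

lemma bij_rel_converse: "bij_rel F A B \<Longrightarrow> bij_rel (F\<inverse>) B A"
  unfolding bij_rel_def by blast

lemma bij_rel_relcomp:
  assumes F: "bij_rel F A B" and G: "bij_rel G B C"
  shows "bij_rel (F O G) A C"
  unfolding bij_rel_def
proof (intro conjI ballI)
  show "F O G \<subseteq> A \<times> C"
    using bij_rel_subset[OF F] bij_rel_subset[OF G] by blast
  show "\<exists>!w. (u, w) \<in> F O G" if u: "u \<in> A" for u
  proof -
    obtain v w where "(u, v) \<in> F" "(v, w) \<in> G"
      using bij_rel_ex_right[OF F u] bij_rel_ex_right[OF G] bij_rel_subset[OF F] by blast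
    then show ?thesis
      using bij_rel_right_unique[OF F] bij_rel_right_unique[OF G] by blast
  qed
  show "\<exists>!u. (u, w) \<in> F O G" if w: "w \<in> C" for w
  proof -
    obtain u v where "(u, v) \<in> F" "(v, w) \<in> G"
      using bij_rel_ex_left[OF G w] bij_rel_ex_left[OF F] bij_rel_subset[OF G] by blast
    then show ?thesis
      using bij_rel_left_unique[OF F] bij_rel_left_unique[OF G] by blast
  qed
qed

lemma times_relcomp_bij_rel: "bij_rel G B C \<Longrightarrow> (A \<times> B) O G = A \<times> C"
  unfolding bij_rel_def by blast

lemma bij_rel_relcomp_times: "bij_rel F A B \<Longrightarrow> F O (B \<times> C) = A \<times> C"
  unfolding bij_rel_def by blast

lemma bij_rel_relcomp_converse_relcomp:
  assumes F: "bij_rel F A C" and G: "bij_rel G B C"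
  shows "(F O G\<inverse>) O G = F"
proof
  show "(F O G\<inverse>) O G \<subseteq> F"
    using bij_rel_right_unique[OF G] by blast
  show "F \<subseteq> (F O G\<inverse>) O G"
  proof clarify
    fix u w
    assume "(u, w) \<in> F"
    moreover obtain v where "(v, w) \<in> G"
      using bij_rel_ex_left[OF G] bij_rel_subset[OF F] calculation by blast
    ultimately show "(u, w) \<in> (F O G\<inverse>) O G"
      by blast
  qed
qed

lemma card_Image_singleton_eq_1: "card (F `` {u}) = 1 \<longleftrightarrow> (\<exists>!v. (u, v) \<in> F)"
  by (metis Image_singleton_iff is_singleton_altdef is_singleton_iff_ex1)

lemma bij_rel_iff_card_Image:
  assumes "F \<subseteq> A \<times> B"
  shows "bij_rel F A B \<longleftrightarrow> (\<forall>u\<in>A. card (F `` {u}) = 1) \<and> (\<forall>v\<in>B. card (F\<inverse> `` {v}) = 1)"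
  using assms unfolding bij_rel_def card_Image_singleton_eq_1 by simp

lemma bij_rel_card2_disjoint:
  assumes "card B = 2" and F: "bij_rel F A B" and G: "bij_rel G A B" and "F \<inter> G = {}"
  shows "G = A \<times> B - F"
proof
  show "G \<subseteq> A \<times> B - F"
    using assms(4) bij_rel_subset[OF G] by blast
  show "A \<times> B - F \<subseteq> G"
  proof clarify
    fix u v
    assume uv: "u \<in> A" "v \<in> B" "(u, v) \<notin> F"
    obtain vF vG where "(u, vF) \<in> F" "(u, vG) \<in> G"
      using bij_rel_ex_right[OF F uv(1)] bij_rel_ex_right[OF G uv(1)] by blast
    moreover have "vF \<in> B" "vG \<in> B"
      using calculation bij_rel_subset[OF F] bij_rel_subset[OF G] by blast+
    moreover have "vF \<noteq> vG"
      using calculation(1,2) assms(4) by blast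
    ultimately show "(u, v) \<in> G"
      using uv assms(1) by (auto simp: card_2_iff)
  qed
qed

lemma bij_rel_card2_cases:
  assumes "card B = 2" and F: "bij_rel F A B" and G: "bij_rel G A B"
  shows "G = F \<or> G = A \<times> B - F"
proof (cases "F \<inter> G = {}")
  case False
  then obtain u0 v0 where uv0: "(u0, v0) \<in> F" "(u0, v0) \<in> G"
    by auto
  have agree: "vF = vG" if uvF: "(u, vF) \<in> F" and uvG: "(u, vG) \<in> G" for u vF vG
  proof (rule ccontr)
    assume "vF \<noteq> vG"
    moreover have "vF \<in> B" "vG \<in> B" "v0 \<in> B"
      using uvF uvG uv0 bij_rel_subset[OF F] bij_rel_subset[OF G] by blast+
    ultimately have "v0 = vF \<or> v0 = vG"
      using assms(1) by (auto simp: card_2_iff)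
    then have "u = u0"
      using uvF uvG uv0 bij_rel_left_unique[OF F] bij_rel_left_unique[OF G] by blast
    with \<open>vF \<noteq> vG\<close> show False
      using uvF uvG uv0 bij_rel_right_unique[OF F] bij_rel_right_unique[OF G] by blast
  qed
  have "G = F"
  proof (intro set_eqI iffI)
    fix z
    assume "z \<in> G"
    then show "z \<in> F"
      using agree bij_rel_ex_right[OF F] bij_rel_subset[OF G] by fastforce
  next
    fix z
    assume "z \<in> F"
    then show "z \<in> G"
      using agree bij_rel_ex_right[OF G] bij_rel_subset[OF F] by fastforce
  qed
  then show ?thesis ..
qed (use bij_rel_card2_disjoint[OF assms] in blast)

lemma bij_rel_card2_complement:
  assumes "card A = 2" "card B = 2" and F: "bij_rel F A B"
  shows "bij_rel (A \<times> B - F) A B"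
proof -
  have fin: "finite A" "finite B"
    using assms(1,2) by (simp_all add: card_ge_0_finite)
  have F_card: "\<forall>u\<in>A. card (F `` {u}) = 1" "\<forall>v\<in>B. card (F\<inverse> `` {v}) = 1"
    using F bij_rel_iff_card_Image[OF bij_rel_subset[OF F]] by blast+
  have "card ((A \<times> B - F) `` {u}) = 1" if "u \<in> A" for u
  proof -
    have "(A \<times> B - F) `` {u} = B - F `` {u}" "F `` {u} \<subseteq> B"
      using that bij_rel_subset[OF F] by auto
    then show ?thesis
      using that assms(2) fin F_card by (simp add: card_Diff_subset finite_subset)
  qed
  moreover have "card ((A \<times> B - F)\<inverse> `` {v}) = 1" if "v \<in> B" for v
  proof -
    have "(A \<times> B - F)\<inverse> `` {v} = A - F\<inverse> `` {v}" "F\<inverse> `` {v} \<subseteq> A"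
      using that bij_rel_subset[OF F] by auto
    then show ?thesis
      using that assms(1) fin F_card by (simp add: card_Diff_subset finite_subset)
  qed
  ultimately show ?thesis
    by (simp add: bij_rel_iff_card_Image[OF Diff_subset])
qed

lemma regular_rel_rows_card_eq_1:
  assumes "finite B" "card B \<le> 2" "F \<subseteq> A \<times> B"
    and rows: "\<And>u u'. u \<in> A \<Longrightarrow> u' \<in> A \<Longrightarrow> card (F `` {u}) = card (F `` {u'})"
    and "(u0, v0) \<in> F" "u1 \<in> A" "v1 \<in> B" "(u1, v1) \<notin> F"
  shows "(\<forall>u\<in>A. card (F `` {u}) = 1) \<and> card B = 2"
proof -
  have row_subset: "F `` {u} \<subseteq> B" for u
    using assms(3) by blast
  have "u0 \<in> A"
    using assms(3,5) by blast
  have "card (F `` {u1}) = card (F `` {u0})"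
    using rows[OF assms(6) \<open>u0 \<in> A\<close>] .
  also have "\<dots> \<ge> 1"
    using assms(5) finite_subset[OF row_subset assms(1)] by (auto simp: Suc_le_eq card_gt_0_iff)
  finally have "card (F `` {u1}) \<ge> 1" .
  moreover have "card (F `` {u1}) \<le> card (B - {v1})"
    using assms(1,8) row_subset by (intro card_mono) auto
  moreover have "card (B - {v1}) = card B - 1"
    using assms(1,7) by simp
  ultimately have "card (F `` {u1}) = 1" "card B = 2"
    using assms(2) by linarith+
  moreover have "card (F `` {u}) = card (F `` {u1})" if "u \<in> A" for u
    using rows[OF that assms(6)] .
  ultimately show ?thesis
    by simp
qed

lemma regular_rel_card_le2_cases:
  assumes "finite A" "finite B" "card A \<le> 2" "card B \<le> 2" "F \<subseteq> A \<times> B"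
    and rows: "\<And>u u'. u \<in> A \<Longrightarrow> u' \<in> A \<Longrightarrow> card (F `` {u}) = card (F `` {u'})"
    and cols: "\<And>v v'. v \<in> B \<Longrightarrow> v' \<in> B \<Longrightarrow> card (F\<inverse> `` {v}) = card (F\<inverse> `` {v'})"
  shows "F = {} \<or> F = A \<times> B \<or> (bij_rel F A B \<and> card A = 2 \<and> card B = 2)"
proof (cases "F = {} \<or> F = A \<times> B")
  case False
  then obtain u0 v0 u1 v1 where pts: "(u0, v0) \<in> F" "u1 \<in> A" "v1 \<in> B" "(u1, v1) \<notin> F"
    using assms(5) by auto
  have rows1: "(\<forall>u\<in>A. card (F `` {u}) = 1) \<and> card B = 2"
    using regular_rel_rows_card_eq_1[OF assms(2,4,5) rows pts] .
  have cols1: "(\<forall>v\<in>B. card (F\<inverse> `` {v}) = 1) \<and> card A = 2"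
    using assms(5) pts
    by (intro regular_rel_rows_card_eq_1[of A "F\<inverse>" B v0 u0 v1 u1, OF assms(1,3) _ cols]) auto
  have "bij_rel F A B"
    using rows1 cols1 unfolding bij_rel_iff_card_Image[OF assms(5)] by simp
  with rows1 cols1 show ?thesis
    by simp
qed auto

section \<open>Chains and powers of a relation\<close>

lemma linked_chain_iff_relpowp:
  fixes S :: "'a \<Rightarrow> 'b \<Rightarrow> 'a \<Rightarrow> bool"
  shows "(\<exists>(a::nat) i j l. 1 \<le> a \<and> i 0 = u \<and> l a = v \<and> (\<forall>b\<le>a. S (i b) (j b) (l b))
      \<and> (\<forall>c<a. l c = i (c + 1)))
   \<longleftrightarrow> (\<exists>n\<ge>2. ((\<lambda>p q. \<exists>r. S p r q) ^^ n) u v)"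
  (is "?chain \<longleftrightarrow> (\<exists>n\<ge>2. (?P ^^ n) u v)")
proof
  assume ?chain
  then obtain a :: nat and i j l where chain: "1 \<le> a" "i 0 = u" "l a = v" "\<forall>b\<le>a. S (i b) (j b) (l b)"
    "\<forall>c<a. l c = i (c + 1)"
    by blast
  define f where "f k = (if k = 0 then u else l (k - 1))" for k
  have "f k = i k" if "k \<le> a" for k
    using that chain(2,5) by (cases k) (auto simp: f_def)
  then have "\<forall>k<Suc a. ?P (f k) (f (Suc k))"
    using chain(4) by (auto simp: f_def less_Suc_eq_le simp del: One_nat_def)
  then have "(?P ^^ Suc a) u v"
    unfolding relpowp_fun_conv using chain(3) by (intro exI[of _ f]) (simp add: f_def)
  then show "\<exists>n\<ge>2. (?P ^^ n) u v"
    using chain(1) by (intro exI[of _ "Suc a"]) simp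
next
  assume "\<exists>n\<ge>2. (?P ^^ n) u v"
  then obtain n f where n: "n \<ge> 2" and f: "f 0 = u" "f n = v" "\<forall>k\<in>{..<n}. \<exists>r. S (f k) r (f (Suc k))"
    unfolding relpowp_fun_conv by auto
  from bchoice[OF f(3)] obtain j where j: "\<forall>k\<in>{..<n}. S (f k) (j k) (f (Suc k))" ..
  have "1 \<le> n - 1" "f (Suc (n - 1)) = v" "\<forall>b\<le>n - 1. S (f b) (j b) (f (Suc b))"
    using n f(2) j by auto
  with f(1) show ?chain
    by (intro exI[of _ "n - 1"] exI[of _ f] exI[of _ j] exI[of _ "f \<circ> Suc"]) simp
qed

lemma tranclp_iff_relpowp_ge2:
  assumes refl_at_target: "\<And>u v. P u v \<Longrightarrow> P v v"
  shows "P\<^sup>+\<^sup>+ u v \<longleftrightarrow> (\<exists>n\<ge>2. (P ^^ n) u v)"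
proof
  assume "P\<^sup>+\<^sup>+ u v"
  then obtain n where n: "n > 0" "(P ^^ n) u v"
    by (auto simp: tranclp_power)
  then obtain m where "n = Suc m"
    using gr0_conv_Suc by blast
  with n(2) obtain w where "P w v"
    using relpowp_Suc_E by metis
  then have "(P ^^ Suc n) u v"
    using relpowp_Suc_I[OF n(2)] refl_at_target by blast
  then show "\<exists>n\<ge>2. (P ^^ n) u v"
    using n(1) by (intro exI[of _ "Suc n"]) simp
next
  assume "\<exists>n\<ge>2. (P ^^ n) u v"
  then obtain n where "n \<ge> 2" "(P ^^ n) u v"
    by blast
  then show "P\<^sup>+\<^sup>+ u v"
    unfolding tranclp_power by (intro exI[of _ n]) simp
qed

section \<open>The Terwilliger algebra of a quasi-thin scheme\<close>

locale quasi_thin_scheme =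
  fixes R :: "nat \<Rightarrow> ('x::finite \<times> 'x) set" and d :: nat and x :: 'x
  assumes scheme: "is_scheme R d" and quasi_thin: "quasi_thin R d"
begin

lemma R_nonempty: "c \<le> d \<Longrightarrow> R c \<noteq> {}"
  using scheme[unfolded is_scheme_def, THEN conjunct1] by blast

lemma R_partition: "\<exists>!c. c \<le> d \<and> z \<in> R c"
  using scheme[unfolded is_scheme_def, THEN conjunct2, THEN conjunct1] by blast

lemma R_0: "R 0 = Id"
  using scheme[unfolded is_scheme_def, THEN conjunct2, THEN conjunct2, THEN conjunct1]
  by (auto simp: Id_def)

lemma R_converse: "c \<le> d \<Longrightarrow> \<exists>c'\<le>d. R c' = (R c)\<inverse>"
  using scheme[unfolded is_scheme_def, THEN conjunct2, THEN conjunct2, THEN conjunct2, THEN conjunct1]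
  unfolding converse_unfold by blast

lemma pcount_eq:
  "\<lbrakk>i \<le> d; j \<le> d; k \<le> d; (m, n) \<in> R k; (m', n') \<in> R k\<rbrakk> \<Longrightarrow> pcount R i j m n = pcount R i j m' n'"
  using scheme[unfolded is_scheme_def, THEN conjunct2, THEN conjunct2, THEN conjunct2, THEN conjunct2]
  by blast

lemma R_unique: "\<lbrakk>a \<le> d; b \<le> d; z \<in> R a; z \<in> R b\<rbrakk> \<Longrightarrow> a = b"
  using R_partition[of z] by blast

definition rel_index :: "'x \<times> 'x \<Rightarrow> nat" where
  "rel_index z = (THE c. c \<le> d \<and> z \<in> R c)"

lemma rel_index: "rel_index z \<le> d" "z \<in> R (rel_index z)"
  using theI'[OF R_partition[of z]] unfolding rel_index_def by simp_all

lemma mem_R_iff_rel_index: "c \<le> d \<Longrightarrow> z \<in> R c \<longleftrightarrow> c = rel_index z"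
  using rel_index R_unique by blast

lemma conv_idx: assumes "c \<le> d" shows "conv_idx R d c \<le> d" "R (conv_idx R d c) = (R c)\<inverse>"
proof -
  obtain c' where c': "c' \<le> d" "R c' = (R c)\<inverse>"
    using R_converse[OF assms] by blast
  have unique: "c'' = c'" if "c'' \<le> d" "R c'' = (R c)\<inverse>" for c''
  proof -
    obtain z where "z \<in> R c'"
      using R_nonempty[OF c'(1)] by blast
    with that c' show ?thesis
      using R_unique[OF that(1) c'(1)] by simp
  qed
  have "conv_idx R d c = c'"
    unfolding conv_idx_def converse_unfold[symmetric]
    by (rule the_equality) (use c' unique in blast)+
  with c' show "conv_idx R d c \<le> d" "R (conv_idx R d c) = (R c)\<inverse>"
    by simp_all
qed

lemma inum_eq_pcount:
  assumes "i \<le> d" "j \<le> d" "k \<le> d" "(m, n) \<in> R k"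
  shows "inum R i j k = pcount R i j m n"
proof -
  let ?z = "SOME z. z \<in> R k"
  have "(fst ?z, snd ?z) \<in> R k"
    using someI[of "\<lambda>z. z \<in> R k", OF assms(4)] by simp
  from pcount_eq[OF assms(1-3) this assms(4)] show ?thesis
    unfolding inum_def Let_def .
qed

lemma pcount_pos_iff: "pcount R i j m n > 0 \<longleftrightarrow> (\<exists>l. (m, l) \<in> R i \<and> (l, n) \<in> R j)"
  unfolding pcount_def by (auto simp: card_gt_0_iff)

lemma inum_R0: "a \<le> d \<Longrightarrow> inum R a 0 a = 1"
proof -
  assume "a \<le> d"
  then obtain m n where mn: "(m, n) \<in> R a"
    using R_nonempty by fast
  then have "{l. (m, l) \<in> R a \<and> (l, n) \<in> R 0} = {n}"
    by (auto simp: R_0)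
  then show ?thesis
    using inum_eq_pcount[OF \<open>a \<le> d\<close> _ \<open>a \<le> d\<close> mn] unfolding pcount_def by simp
qed

definition cell :: "nat \<Rightarrow> 'x set" where
  "cell a = {u. (x, u) \<in> R a}"

lemma mem_cell_iff: "a \<le> d \<Longrightarrow> u \<in> cell a \<longleftrightarrow> a = rel_index (x, u)"
  unfolding cell_def using mem_R_iff_rel_index by simp

lemma cell_unique: "\<lbrakk>a \<le> d; b \<le> d; u \<in> cell a; u \<in> cell b\<rbrakk> \<Longrightarrow> a = b"
  unfolding cell_def using R_unique by blast

lemma valency_eq_card_cell: "a \<le> d \<Longrightarrow> valency R d a = card (cell a)"
proof -
  assume a: "a \<le> d"
  have "valency R d a = pcount R a (conv_idx R d a) x x"
    unfolding valency_def using inum_eq_pcount[OF a conv_idx(1)[OF a] _, of 0 x x] by (simp add: R_0)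
  also have "\<dots> = card (cell a)"
    unfolding pcount_def cell_def using conv_idx(2)[OF a] by simp
  finally show ?thesis .
qed

lemma cell_nonempty: "a \<le> d \<Longrightarrow> cell a \<noteq> {}"
proof -
  assume a: "a \<le> d"
  then obtain m n where "(m, n) \<in> R a"
    using R_nonempty by fast
  then have "pcount R a (conv_idx R d a) m m > 0"
    using conv_idx(2)[OF a] by (auto simp: pcount_pos_iff)
  then have "pcount R a (conv_idx R d a) x x > 0"
    using pcount_eq[OF a conv_idx(1)[OF a], of 0 m m x x] by (simp add: R_0)
  then show ?thesis
    using conv_idx(2)[OF a] unfolding pcount_pos_iff cell_def by auto
qed

lemma card_cell: "a \<le> d \<Longrightarrow> card (cell a) = 1 \<or> card (cell a) = 2"
proof -
  assume a: "a \<le> d"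
  have "card (cell a) \<le> 2"
    using quasi_thin[unfolded quasi_thin_def, rule_format, OF a] valency_eq_card_cell[OF a] by simp
  moreover have "card (cell a) \<noteq> 0"
    using cell_nonempty[OF a] by simp
  ultimately show ?thesis
    by linarith
qed

definition block :: "nat \<Rightarrow> nat \<Rightarrow> nat \<Rightarrow> ('x \<times> 'x) set" where
  "block c a b = R c \<inter> cell a \<times> cell b"

lemma card_block_column:
  assumes "a \<le> d" "c \<le> d" "b \<le> d" "v \<in> cell b"
  shows "card ((block c a b)\<inverse> `` {v}) = inum R a c b"
proof -
  have "(block c a b)\<inverse> `` {v} = {u. (x, u) \<in> R a \<and> (u, v) \<in> R c}"
    using assms(4) unfolding block_def cell_def by auto
  then show ?thesis
    using inum_eq_pcount[OF assms(1-3), of x v] assms(4) unfolding pcount_def cell_def by simp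
qed

lemma card_block_row:
  assumes "a \<le> d" "c \<le> d" "b \<le> d" "u \<in> cell a"
  shows "card (block c a b `` {u}) = inum R c (conv_idx R d b) (conv_idx R d a)"
proof -
  have "(u, x) \<in> R (conv_idx R d a)"
    using assms(4) conv_idx(2)[OF assms(1)] unfolding cell_def by simp
  then have "inum R c (conv_idx R d b) (conv_idx R d a) = pcount R c (conv_idx R d b) u x"
    using inum_eq_pcount assms(1-3) conv_idx(1) by blast
  moreover have "block c a b `` {u} = {v. (u, v) \<in> R c \<and> (v, x) \<in> R (conv_idx R d b)}"
    using assms(4) conv_idx(2)[OF assms(3)] unfolding block_def cell_def by auto
  ultimately show ?thesis
    unfolding pcount_def by simp
qed

definition thin_step :: "nat \<Rightarrow> nat \<Rightarrow> bool" where
  "thin_step a b \<longleftrightarrow> a \<le> d \<and> b \<le> d \<and> valency R d a = 2 \<and> valency R d b = 2 \<and> (\<exists>c\<le>d. inum R a c b = 1)"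

lemma thin_stepD: "thin_step a b \<Longrightarrow> a \<le> d \<and> b \<le> d \<and> card (cell a) = 2 \<and> card (cell b) = 2"
  unfolding thin_step_def using valency_eq_card_cell by auto

lemma thin_step_target_refl: "thin_step a b \<Longrightarrow> thin_step b b"
  unfolding thin_step_def using inum_R0 by blast

lemma block_cases:
  assumes "a \<le> d" "c \<le> d" "b \<le> d"
  shows "block c a b = {} \<or> block c a b = cell a \<times> cell b
    \<or> (bij_rel (block c a b) (cell a) (cell b) \<and> thin_step a b)"
proof -
  have "block c a b = {} \<or> block c a b = cell a \<times> cell b
    \<or> (bij_rel (block c a b) (cell a) (cell b) \<and> card (cell a) = 2 \<and> card (cell b) = 2)"
  proof (rule regular_rel_card_le2_cases)
    show "card (cell a) \<le> 2" "card (cell b) \<le> 2"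
      using card_cell assms by fastforce+
    show "block c a b \<subseteq> cell a \<times> cell b"
      unfolding block_def by blast
    show "card (block c a b `` {u}) = card (block c a b `` {u'})" if "u \<in> cell a" "u' \<in> cell a" for u u'
      using card_block_row[OF assms] that by simp
    show "card ((block c a b)\<inverse> `` {v}) = card ((block c a b)\<inverse> `` {v'})"
      if "v \<in> cell b" "v' \<in> cell b" for v v'
      using card_block_column[OF assms] that by simp
  qed simp_all
  moreover have "inum R a c b = 1" if "bij_rel (block c a b) (cell a) (cell b)"
  proof -
    obtain v where "v \<in> cell b"
      using cell_nonempty[OF assms(3)] by blast
    then have "card ((block c a b)\<inverse> `` {v}) = 1"
      using that bij_rel_iff_card_Image[OF bij_rel_subset[OF that]] by blast
    then show ?thesis
      using card_block_column[OF assms \<open>v \<in> cell b\<close>] by simp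
  qed
  ultimately show ?thesis
    unfolding thin_step_def using assms valency_eq_card_cell by auto
qed

lemma thin_step_bij_block:
  assumes "thin_step a b"
  obtains c where "c \<le> d" "bij_rel (block c a b) (cell a) (cell b)"
proof -
  obtain c where c: "c \<le> d" "inum R a c b = 1" and ab: "a \<le> d" "b \<le> d" "card (cell a) = 2"
    using assms thin_stepD[OF assms] unfolding thin_step_def by blast
  obtain v where v: "v \<in> cell b"
    using cell_nonempty[OF ab(2)] by blast
  have column: "card ((block c a b)\<inverse> `` {v}) = 1"
    using card_block_column[OF ab(1) c(1) ab(2) v] c(2) by simp
  moreover have "(cell a \<times> cell b)\<inverse> `` {v} = cell a"
    using v by auto
  ultimately have "block c a b \<noteq> {}" "block c a b \<noteq> cell a \<times> cell b"
    using ab(3) by auto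
  with block_cases[OF ab(1) c(1) ab(2)] that c(1) show thesis
    by blast
qed

lemma block_column_nonempty:
  assumes "a \<le> d" "c \<le> d" "b \<le> d" "block c a b \<noteq> {}" "v \<in> cell b"
  shows "\<exists>u\<in>cell a. (u, v) \<in> R c"
proof -
  obtain u0 v0 where "(u0, v0) \<in> block c a b"
    using assms(4) by auto
  then have "card ((block c a b)\<inverse> `` {v0}) > 0" "v0 \<in> cell b"
    by (auto simp: card_gt_0_iff block_def)
  then have "card ((block c a b)\<inverse> `` {v}) > 0"
    using card_block_column[OF assms(1-3)] assms(5) by simp
  then show ?thesis
    unfolding block_def by (auto simp: card_gt_0_iff)
qed

lemma mem_cprod_iff:
  assumes a: "a \<le> d" and b: "b \<le> d"
  shows "c \<in> cprod R d (conv_idx R d a) b \<longleftrightarrow> c \<le> d \<and> block c a b \<noteq> {}"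
proof
  assume "c \<in> cprod R d (conv_idx R d a) b"
  then have c: "c \<le> d" "inum R (conv_idx R d a) b c > 0"
    unfolding cprod_def by auto
  obtain m n where mn: "(m, n) \<in> R c"
    using R_nonempty[OF c(1)] by fast
  then obtain l where l: "(l, m) \<in> R a" "(l, n) \<in> R b"
    using c(2) inum_eq_pcount[OF conv_idx(1)[OF a] b c(1) mn] conv_idx(2)[OF a]
    by (auto simp: pcount_pos_iff)
  obtain v where v: "v \<in> cell b"
    using cell_nonempty[OF b] by blast
  have "pcount R a c l n > 0"
    using l(1) mn by (auto simp: pcount_pos_iff)
  then have "pcount R a c x v > 0"
    using pcount_eq[OF a c(1) b l(2), of x v] v unfolding cell_def by simp
  then have "(block c a b)\<inverse> `` {v} \<noteq> {}"
    using v unfolding pcount_pos_iff block_def cell_def by auto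
  with c(1) show "c \<le> d \<and> block c a b \<noteq> {}"
    by auto
next
  assume "c \<le> d \<and> block c a b \<noteq> {}"
  then obtain u v where c: "c \<le> d" and uv: "(u, v) \<in> R c" "u \<in> cell a" "v \<in> cell b"
    unfolding block_def by auto
  have "pcount R (conv_idx R d a) b u v > 0"
    using uv conv_idx(2)[OF a] unfolding pcount_pos_iff cell_def by auto
  then show "c \<in> cprod R d (conv_idx R d a) b"
    unfolding cprod_def using c inum_eq_pcount[OF conv_idx(1)[OF a] b c uv(1)] by simp
qed

lemma cprod_eq_image:
  assumes a: "a \<le> d" and b: "b \<le> d" and v: "v \<in> cell b"
  shows "cprod R d (conv_idx R d a) b = (\<lambda>u. rel_index (u, v)) ` cell a"
proof (intro set_eqI iffI)
  fix c
  assume "c \<in> cprod R d (conv_idx R d a) b"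
  then obtain u where "u \<in> cell a" "(u, v) \<in> R c" "c \<le> d"
    using block_column_nonempty[OF a _ b _ v] mem_cprod_iff[OF a b] by blast
  then show "c \<in> (\<lambda>u. rel_index (u, v)) ` cell a"
    using mem_R_iff_rel_index by blast
next
  fix c
  assume "c \<in> (\<lambda>u. rel_index (u, v)) ` cell a"
  then obtain u where "u \<in> cell a" "c = rel_index (u, v)"
    by blast
  then show "c \<in> cprod R d (conv_idx R d a) b"
    using rel_index[of "(u, v)"] v mem_cprod_iff[OF a b] unfolding block_def by blast
qed

lemma card_cprod:
  assumes a: "a \<le> d" and b: "b \<le> d"
  shows "card (cprod R d (conv_idx R d a) b) = 1 \<or> card (cprod R d (conv_idx R d a) b) = 2"
proof -
  obtain v where v: "v \<in> cell b"
    using cell_nonempty[OF b] by blast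
  have "card (cprod R d (conv_idx R d a) b) \<le> card (cell a)"
    unfolding cprod_eq_image[OF a b v] by (rule card_image_le) simp
  moreover have "card (cprod R d (conv_idx R d a) b) \<noteq> 0"
    unfolding cprod_eq_image[OF a b v] using cell_nonempty[OF a] by simp
  ultimately show ?thesis
    using card_cell[OF a] by linarith
qed

lemma card_cprod_eq_2_imp_thin_step:
  assumes a: "a \<le> d" and b: "b \<le> d" and two: "card (cprod R d (conv_idx R d a) b) = 2"
  shows "thin_step a b"
proof -
  obtain c1 c2 where c: "c1 \<in> cprod R d (conv_idx R d a) b" "c2 \<in> cprod R d (conv_idx R d a) b" "c1 \<noteq> c2"
    using two by (auto simp: card_2_iff)
  then have c1: "c1 \<le> d" "block c1 a b \<noteq> {}" and c2: "c2 \<le> d" "block c2 a b \<noteq> {}"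
    using mem_cprod_iff[OF a b] by blast+
  have "block c1 a b \<inter> block c2 a b = {}"
    using R_unique c1(1) c2(1) c(3) unfolding block_def by blast
  then have "block c1 a b \<noteq> cell a \<times> cell b"
    using c2(2) unfolding block_def by blast
  then show ?thesis
    using block_cases[OF a c1(1) b] c1(2) by blast
qed

lemma thin_step_tranclpD:
  "thin_step\<^sup>+\<^sup>+ a b \<Longrightarrow> a \<le> d \<and> b \<le> d \<and> card (cell a) = 2 \<and> card (cell b) = 2"
  by (induction rule: tranclp_induct) (auto dest: thin_stepD)

lemma bad_pair_iff:
  "bad_pair R d u v \<longleftrightarrow> thin_step\<^sup>+\<^sup>+ u v \<and> card (cprod R d (conv_idx R d u) v) = 1"
proof -
  define S where "S p r q \<longleftrightarrow> p \<le> d \<and> r \<le> d \<and> q \<le> d \<and> valency R d p = 2 \<and> valency R d q = 2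
    \<and> inum R p r q = 1" for p r q
  have step: "thin_step = (\<lambda>p q. \<exists>r. S p r q)"
    unfolding thin_step_def S_def by (intro ext) blast
  have "bad_pair R d u v \<longleftrightarrow> (\<exists>(a::nat) i j l. 1 \<le> a \<and> i 0 = u \<and> l a = v
      \<and> (\<forall>b\<le>a. S (i b) (j b) (l b)) \<and> (\<forall>c<a. l c = i (c + 1)))
      \<and> card (cprod R d (conv_idx R d u) v) = 1"
    unfolding bad_pair_def S_def by (simp add: imp_conjR all_conj_distrib conj_ac)
  \<comment> \<open>chains have at least two links, but a single thin step u \<rightarrow> v extends by v \<rightarrow> v\<close>
  also have "\<dots> \<longleftrightarrow> thin_step\<^sup>+\<^sup>+ u v \<and> card (cprod R d (conv_idx R d u) v) = 1"
    unfolding linked_chain_iff_relpowp step[symmetric]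
    using tranclp_iff_relpowp_ge2[of thin_step, OF thin_step_target_refl] by simp
  finally show ?thesis .
qed

lemma card_thin_step_tranclp:
  "card {(a, b). a \<le> d \<and> b \<le> d \<and> thin_step\<^sup>+\<^sup>+ a b}
   = card {(a, b). a \<le> d \<and> b \<le> d \<and> card (cprod R d (conv_idx R d a) b) = 2}
     + card {(c, e). c \<le> d \<and> e \<le> d \<and> bad_pair R d c e}"
proof -
  have fin: "finite {(a, b). a \<le> d \<and> b \<le> d \<and> P a b}" for P
    by (rule finite_subset[of _ "{..d} \<times> {..d}"]) auto
  have "{(a, b). a \<le> d \<and> b \<le> d \<and> thin_step\<^sup>+\<^sup>+ a b}
      = {(a, b). a \<le> d \<and> b \<le> d \<and> card (cprod R d (conv_idx R d a) b) = 2}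
        \<union> {(c, e). c \<le> d \<and> e \<le> d \<and> bad_pair R d c e}"
    using card_cprod card_cprod_eq_2_imp_thin_step by (auto simp: bad_pair_iff)
  moreover have "{(a, b). a \<le> d \<and> b \<le> d \<and> card (cprod R d (conv_idx R d a) b) = 2}
      \<inter> {(c, e). c \<le> d \<and> e \<le> d \<and> bad_pair R d c e} = {}"
    by (auto simp: bad_pair_iff)
  ultimately show ?thesis
    by (simp add: card_Un_disjoint fin)
qed

abbreviation T :: "('x \<Rightarrow> 'x \<Rightarrow> 'f::field) set" where
  "T \<equiv> terwilliger R d x"

lemma mmult_mem_T: "M \<in> T \<Longrightarrow> N \<in> T \<Longrightarrow> mmult M N \<in> T"
  unfolding terwilliger_def by (rule gen_alg.mult)

lemma adj_mat_mem_T: "c \<le> d \<Longrightarrow> adj_mat R c \<in> T"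
  unfolding terwilliger_def by (rule gen_alg.gen) blast

lemma dual_idem_mem_T: "a \<le> d \<Longrightarrow> dual_idem R x a \<in> T"
  unfolding terwilliger_def by (rule gen_alg.gen) blast

lemma subspace_T: "mspace.subspace (T :: ('x \<Rightarrow> 'x \<Rightarrow> 'f::field) set)"
proof -
  have "mscale 0 (\<lambda>i j. if i = j then 1 else 0) \<in> T"
    unfolding terwilliger_def by (intro gen_alg.scale gen_alg.one)
  moreover have "mscale 0 (\<lambda>i j. if i = j then 1 else 0) = (0 :: 'x \<Rightarrow> 'x \<Rightarrow> 'f)"
    by (simp add: mscale_def fun_eq_iff)
  ultimately show ?thesis
    unfolding mspace.subspace_def terwilliger_def by (auto intro: gen_alg.add gen_alg.scale)
qed

lemma adj_mat_eq_ind_mat: "adj_mat R c = ind_mat (R c)"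
  unfolding adj_mat_def ind_mat_def ..

lemma dual_idem_eq_ind_mat: "dual_idem R x a = ind_mat (Id_on (cell a))"
  unfolding dual_idem_def ind_mat_def cell_def by (auto simp: fun_eq_iff)

lemma block_mem_T:
  assumes "a \<le> d" "c \<le> d" "b \<le> d"
  shows "(ind_mat (block c a b) :: 'x \<Rightarrow> 'x \<Rightarrow> 'f::field) \<in> T"
proof -
  have "mmult (mmult (dual_idem R x a) (adj_mat R c)) (dual_idem R x b)
      = (ind_mat ((Id_on (cell a) O R c) O Id_on (cell b)) :: 'x \<Rightarrow> 'x \<Rightarrow> 'f)"
    unfolding dual_idem_eq_ind_mat adj_mat_eq_ind_mat
    by (subst mmult_ind_mat_relcomp, blast)+ (rule refl)
  also have "(Id_on (cell a) O R c) O Id_on (cell b) = block c a b"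
    unfolding block_def by auto
  finally show ?thesis
    using assms by (metis mmult_mem_T adj_mat_mem_T dual_idem_mem_T)
qed

lemma cell_times_cell_mem_T:
  assumes "a \<le> d" "b \<le> d"
  shows "(ind_mat (cell a \<times> cell b) :: 'x \<Rightarrow> 'x \<Rightarrow> 'f::field) \<in> T"
proof -
  have "(ind_mat (cell a \<times> cell b) :: 'x \<Rightarrow> 'x \<Rightarrow> 'f) = (\<Sum>c\<le>d. ind_mat (block c a b))"
    unfolding block_def using R_partition by (intro ind_mat_eq_sum_partition) auto
  also have "\<dots> \<in> T"
    using assms by (intro mspace.subspace_sum[OF subspace_T] block_mem_T) auto
  finally show ?thesis .
qed

lemma thin_step_tranclp_obtain_bij:
  assumes "thin_step\<^sup>+\<^sup>+ a b"
  obtains P where "bij_rel P (cell a) (cell b)"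
  using assms
proof (induction arbitrary: thesis rule: tranclp_induct)
  case (base b)
  then show ?case
    using thin_step_bij_block by metis
next
  case (step b c)
  then show ?case
    using thin_step_bij_block bij_rel_relcomp by metis
qed

lemma bij_mem_T:
  assumes "thin_step\<^sup>+\<^sup>+ a b" "bij_rel F (cell a) (cell b)"
  shows "(ind_mat F :: 'x \<Rightarrow> 'x \<Rightarrow> 'f::field) \<in> T"
  using assms
proof (induction arbitrary: F rule: tranclp_induct)
  case (base b)
  obtain c where c: "c \<le> d" "bij_rel (block c a b) (cell a) (cell b)"
    using thin_step_bij_block[OF base.hyps] .
  have ab: "a \<le> d" "b \<le> d" "card (cell b) = 2"
    using thin_stepD[OF base.hyps] by auto
  have "(ind_mat (block c a b) :: 'x \<Rightarrow> 'x \<Rightarrow> 'f) \<in> T"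
    using block_mem_T ab c(1) by blast
  moreover have "(ind_mat (cell a \<times> cell b - block c a b) :: 'x \<Rightarrow> 'x \<Rightarrow> 'f) \<in> T"
    unfolding ind_mat_diff[OF bij_rel_subset[OF c(2)]]
    by (intro mspace.subspace_diff[OF subspace_T] cell_times_cell_mem_T ab calculation)
  ultimately show ?case
    using bij_rel_card2_cases[OF ab(3) c(2) base.prems] by auto
next
  case (step b c)
  obtain j where j: "j \<le> d" "bij_rel (block j b c) (cell b) (cell c)"
    using thin_step_bij_block[OF step.hyps(2)] .
  let ?G = "block j b c"
  have "bij_rel (F O ?G\<inverse>) (cell a) (cell b)"
    using bij_rel_relcomp[OF step.prems bij_rel_converse[OF j(2)]] .
  then have "(ind_mat (F O ?G\<inverse>) :: 'x \<Rightarrow> 'x \<Rightarrow> 'f) \<in> T"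
    by (rule step.IH)
  moreover have "(ind_mat ?G :: 'x \<Rightarrow> 'x \<Rightarrow> 'f) \<in> T"
    using block_mem_T thin_stepD[OF step.hyps(2)] j(1) by blast
  moreover have "mmult (ind_mat (F O ?G\<inverse>)) (ind_mat ?G) = (ind_mat ((F O ?G\<inverse>) O ?G) :: 'x \<Rightarrow> 'x \<Rightarrow> 'f)"
    using bij_rel_left_unique[OF j(2)] by (intro mmult_ind_mat_relcomp) blast
  ultimately show ?case
    using mmult_mem_T bij_rel_relcomp_converse_relcomp[OF step.prems j(2)] by metis
qed

definition tiles :: "nat \<Rightarrow> nat \<Rightarrow> ('x \<times> 'x) set set" where
  "tiles a b = (if thin_step\<^sup>+\<^sup>+ a b then {F. bij_rel F (cell a) (cell b)} else {cell a \<times> cell b})"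

definition tiling :: "('x \<times> 'x) set set" where
  "tiling = (\<Union>(a, b)\<in>{..d} \<times> {..d}. tiles a b)"

lemma tile_cases:
  "F \<in> tiles a b \<Longrightarrow> F = cell a \<times> cell b \<or> (thin_step\<^sup>+\<^sup>+ a b \<and> bij_rel F (cell a) (cell b))"
  unfolding tiles_def by (auto split: if_splits)

lemma tile_subset: "F \<in> tiles a b \<Longrightarrow> F \<subseteq> cell a \<times> cell b"
  using tile_cases bij_rel_subset by blast

lemma tiles_eq_pair:
  assumes "thin_step\<^sup>+\<^sup>+ a b" "bij_rel P (cell a) (cell b)"
  shows "tiles a b = {P, cell a \<times> cell b - P}"
proof -
  have card: "card (cell a) = 2" "card (cell b) = 2"
    using thin_step_tranclpD[OF assms(1)] by auto
  have "{F. bij_rel F (cell a) (cell b)} = {P, cell a \<times> cell b - P}"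
  proof (intro set_eqI iffI)
    fix F
    assume "F \<in> {F. bij_rel F (cell a) (cell b)}"
    then show "F \<in> {P, cell a \<times> cell b - P}"
      using bij_rel_card2_cases[OF card(2) assms(2)] by blast
  next
    fix F
    assume "F \<in> {P, cell a \<times> cell b - P}"
    then show "F \<in> {F. bij_rel F (cell a) (cell b)}"
      using assms(2) bij_rel_card2_complement[OF card assms(2)] by blast
  qed
  with assms(1) show ?thesis
    unfolding tiles_def by simp
qed

lemma tile_nonempty:
  assumes "a \<le> d" "b \<le> d" "F \<in> tiles a b"
  shows "F \<noteq> {}"
proof -
  obtain u v where uv: "u \<in> cell a" "v \<in> cell b"
    using cell_nonempty assms(1,2) by blast
  from tile_cases[OF assms(3)] show ?thesis
  proof
    assume "thin_step\<^sup>+\<^sup>+ a b \<and> bij_rel F (cell a) (cell b)"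
    then show ?thesis
      using bij_rel_ex_right uv(1) by fast
  qed (use uv in blast)
qed

lemma card_tiles:
  assumes "a \<le> d" "b \<le> d"
  shows "card (tiles a b) = 1 + of_bool (thin_step\<^sup>+\<^sup>+ a b)"
proof (cases "thin_step\<^sup>+\<^sup>+ a b")
  case True
  then obtain P where P: "bij_rel P (cell a) (cell b)"
    by (rule thin_step_tranclp_obtain_bij)
  then have "P \<noteq> cell a \<times> cell b - P"
    using tile_nonempty[OF assms] tiles_eq_pair[OF True P] by blast
  with True show ?thesis
    unfolding tiles_eq_pair[OF True P] by simp
qed (simp add: tiles_def)

lemma tiles_disjoint:
  assumes "F \<in> tiles a b" "G \<in> tiles a b" "F \<noteq> G"
  shows "F \<inter> G = {}"
proof (cases "thin_step\<^sup>+\<^sup>+ a b")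
  case True
  then obtain P where "bij_rel P (cell a) (cell b)"
    by (rule thin_step_tranclp_obtain_bij)
  with assms show ?thesis
    using tiles_eq_pair[OF True] by auto
next
  case False
  with assms show ?thesis
    unfolding tiles_def by simp
qed

lemma tiles_of_distinct_cells_disjoint:
  assumes "a \<le> d" "b \<le> d" "a' \<le> d" "b' \<le> d" "(a, b) \<noteq> (a', b')"
    and "F \<in> tiles a b" "G \<in> tiles a' b'"
  shows "F \<inter> G = {}"
proof (rule equals0I)
  fix z
  assume "z \<in> F \<inter> G"
  then obtain u v where "u \<in> cell a" "v \<in> cell b" "u \<in> cell a'" "v \<in> cell b'"
    using tile_subset[OF assms(6)] tile_subset[OF assms(7)] by blast
  then have "a = a'" "b = b'"
    using cell_unique[OF assms(1,3)] cell_unique[OF assms(2,4)] by blast+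
  with assms(5) show False
    by simp
qed

lemma tiling_disjoint: "pairwise disjnt tiling"
proof (rule pairwiseI)
  fix F G
  assume "F \<in> tiling" "G \<in> tiling" "F \<noteq> G"
  then obtain a b a' b' where ab: "a \<le> d" "b \<le> d" "F \<in> tiles a b"
    and ab': "a' \<le> d" "b' \<le> d" "G \<in> tiles a' b'"
    unfolding tiling_def by blast
  show "disjnt F G"
  proof (cases "(a, b) = (a', b')")
    case True
    with ab(3) ab'(3) \<open>F \<noteq> G\<close> show ?thesis
      unfolding disjnt_def using tiles_disjoint by simp
  next
    case False
    show ?thesis
      unfolding disjnt_def by (rule tiles_of_distinct_cells_disjoint[OF ab(1,2) ab'(1,2) False ab(3) ab'(3)])
  qed
qed

lemma empty_notin_tiling: "{} \<notin> tiling"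
proof
  assume "{} \<in> tiling"
  then obtain a b where "a \<le> d" "b \<le> d" "{} \<in> tiles a b"
    unfolding tiling_def by blast
  from tile_nonempty[OF this] show False
    by simp
qed

lemma card_tiling: "card tiling = (d + 1)^2 + card {(a, b). a \<le> d \<and> b \<le> d \<and> thin_step\<^sup>+\<^sup>+ a b}"
proof -
  let ?I = "{..d} \<times> {..d}"
  have tiles_disjoint_families: "tiles a b \<inter> tiles a' b' = {}"
    if "a \<le> d" "b \<le> d" "a' \<le> d" "b' \<le> d" "(a, b) \<noteq> (a', b')" for a b a' b'
  proof (rule equals0I)
    fix F
    assume "F \<in> tiles a b \<inter> tiles a' b'"
    then have "F \<inter> F = {}" "F \<noteq> {}"
      using tiles_of_distinct_cells_disjoint[OF that] tile_nonempty[OF that(1,2)] by blast+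
    then show False
      by simp
  qed
  have "card tiling = (\<Sum>p\<in>?I. card ((\<lambda>(a, b). tiles a b) p))"
    unfolding tiling_def
  proof (rule card_UN_disjoint)
    show "\<forall>p\<in>?I. \<forall>q\<in>?I. p \<noteq> q \<longrightarrow> (case p of (a, b) \<Rightarrow> tiles a b) \<inter> (case q of (a, b) \<Rightarrow> tiles a b) = {}"
      using tiles_disjoint_families by clarsimp
  qed simp_all
  also have "\<dots> = (\<Sum>p\<in>?I. 1 + of_bool (thin_step\<^sup>+\<^sup>+ (fst p) (snd p)))"
    by (intro sum.cong refl) (clarsimp simp: card_tiles)
  also have "\<dots> = card ?I + card (?I \<inter> {(a, b). thin_step\<^sup>+\<^sup>+ a b})"
    unfolding sum.distrib by (simp add: case_prod_unfold)
  also have "?I \<inter> {(a, b). thin_step\<^sup>+\<^sup>+ a b} = {(a, b). a \<le> d \<and> b \<le> d \<and> thin_step\<^sup>+\<^sup>+ a b}"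
    by auto
  finally show ?thesis
    by (simp add: power2_eq_square)
qed

lemma tile_mem_T: "F \<in> tiling \<Longrightarrow> (ind_mat F :: 'x \<Rightarrow> 'x \<Rightarrow> 'f::field) \<in> T"
  unfolding tiling_def using tile_cases cell_times_cell_mem_T bij_mem_T by fastforce

abbreviation tiling_span :: "('x \<Rightarrow> 'x \<Rightarrow> 'f::field) set" where
  "tiling_span \<equiv> mspace.span (ind_mat ` tiling)"

lemma tile_mem_tiling_span: "\<lbrakk>a \<le> d; b \<le> d; F \<in> tiles a b\<rbrakk> \<Longrightarrow> ind_mat F \<in> tiling_span"
  unfolding tiling_def by (intro mspace.span_base) blast

lemma cell_times_cell_mem_tiling_span:
  assumes "a \<le> d" "b \<le> d"
  shows "(ind_mat (cell a \<times> cell b) :: 'x \<Rightarrow> 'x \<Rightarrow> 'f::field) \<in> tiling_span"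
proof (cases "thin_step\<^sup>+\<^sup>+ a b")
  case True
  then obtain P where P: "bij_rel P (cell a) (cell b)"
    by (rule thin_step_tranclp_obtain_bij)
  have "(ind_mat (cell a \<times> cell b) :: 'x \<Rightarrow> 'x \<Rightarrow> 'f) = ind_mat (cell a \<times> cell b - P) + ind_mat P"
    by (simp add: ind_mat_diff[OF bij_rel_subset[OF P]])
  also have "\<dots> \<in> tiling_span"
    using tile_mem_tiling_span[OF assms] tiles_eq_pair[OF True P] by (intro mspace.span_add) auto
  finally show ?thesis .
next
  case False
  then show ?thesis
    using tile_mem_tiling_span[OF assms] unfolding tiles_def by simp
qed

lemma bij_mem_tiling_span:
  assumes "thin_step\<^sup>+\<^sup>+ a b" "bij_rel F (cell a) (cell b)"
  shows "ind_mat F \<in> tiling_span"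
proof (rule tile_mem_tiling_span)
  show "a \<le> d" "b \<le> d"
    using thin_step_tranclpD[OF assms(1)] by simp_all
  show "F \<in> tiles a b"
    using assms unfolding tiles_def by simp
qed

lemma block_mem_tiling_span:
  assumes "a \<le> d" "c \<le> d" "b \<le> d"
  shows "ind_mat (block c a b) \<in> tiling_span"
  using block_cases[OF assms] cell_times_cell_mem_tiling_span[OF assms(1,3)] bij_mem_tiling_span
  by (auto simp: mspace.span_zero)

lemma adj_mat_mem_tiling_span:
  assumes "c \<le> d"
  shows "adj_mat R c \<in> tiling_span"
proof -
  have "\<exists>!p. p \<in> {..d} \<times> {..d} \<and> (u, v) \<in> cell (fst p) \<times> cell (snd p)" for u v
    using rel_index(1) mem_cell_iff
    by (intro ex1I[of _ "(rel_index (x, u), rel_index (x, v))"]) auto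
  then have "adj_mat R c = (\<Sum>p\<in>{..d} \<times> {..d}. ind_mat (cell (fst p) \<times> cell (snd p) \<inter> R c))"
    unfolding adj_mat_eq_ind_mat by (intro ind_mat_eq_sum_partition) (auto simp: split_paired_all)
  also have "\<dots> \<in> tiling_span"
    using block_mem_tiling_span assms unfolding block_def
    by (intro mspace.span_sum) (auto simp: Int_commute)
  finally show ?thesis .
qed

lemma dual_idem_mem_tiling_span:
  assumes a: "a \<le> d"
  shows "dual_idem R x a \<in> tiling_span"
proof (cases "card (cell a) = 1")
  case True
  then have "Id_on (cell a) = cell a \<times> cell a"
    by (auto simp: card_1_singleton_iff)
  then show ?thesis
    unfolding dual_idem_eq_ind_mat using cell_times_cell_mem_tiling_span[OF a a] by simp
next
  case False
  then have "thin_step a a"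
    using card_cell[OF a] a inum_R0[OF a] valency_eq_card_cell[OF a] unfolding thin_step_def by auto
  moreover have "bij_rel (Id_on (cell a)) (cell a) (cell a)"
    unfolding bij_rel_def by blast
  ultimately show ?thesis
    unfolding dual_idem_eq_ind_mat by (intro bij_mem_tiling_span) auto
qed

lemma mmult_bij_tile_mem_tiling_span:
  assumes "a \<le> d" "c \<le> d" "thin_step\<^sup>+\<^sup>+ a b" "bij_rel F (cell a) (cell b)" "G \<in> tiles b c"
  shows "(mmult (ind_mat F) (ind_mat G) :: 'x \<Rightarrow> 'x \<Rightarrow> 'f::field) \<in> tiling_span"
proof -
  have product: "mmult (ind_mat F) (ind_mat G) = (ind_mat (F O G) :: 'x \<Rightarrow> 'x \<Rightarrow> 'f)"
    using bij_rel_right_unique[OF assms(4)] by (intro mmult_ind_mat_relcomp) blast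
  from tile_cases[OF assms(5)] show ?thesis
  proof
    assume G: "G = cell b \<times> cell c"
    show ?thesis
      unfolding product unfolding G bij_rel_relcomp_times[OF assms(4)]
      by (rule cell_times_cell_mem_tiling_span[OF assms(1,2)])
  next
    assume "thin_step\<^sup>+\<^sup>+ b c \<and> bij_rel G (cell b) (cell c)"
    then show ?thesis
      using product bij_rel_relcomp[OF assms(4)] bij_mem_tiling_span assms(3) by (metis tranclp_trans)
  qed
qed

lemma mmult_tiles_same_cell_mem_tiling_span:
  assumes "a \<le> d" "b \<le> d" "c \<le> d" "F \<in> tiles a b" "G \<in> tiles b c"
  shows "(mmult (ind_mat F) (ind_mat G) :: 'x \<Rightarrow> 'x \<Rightarrow> 'f::field) \<in> tiling_span"
proof -
  consider "F = cell a \<times> cell b" "G = cell b \<times> cell c"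
    | "F = cell a \<times> cell b" "thin_step\<^sup>+\<^sup>+ b c" "bij_rel G (cell b) (cell c)"
    | "thin_step\<^sup>+\<^sup>+ a b" "bij_rel F (cell a) (cell b)"
    using tile_cases[OF assms(4)] tile_cases[OF assms(5)] by blast
  then show ?thesis
  proof cases
    case 1
    show ?thesis
      unfolding 1 mmult_ind_mat_times by (intro mspace.span_scale cell_times_cell_mem_tiling_span assms)
  next
    case 2
    have "mmult (ind_mat F) (ind_mat G) = (ind_mat (F O G) :: 'x \<Rightarrow> 'x \<Rightarrow> 'f)"
      using bij_rel_left_unique[OF 2(3)] by (intro mmult_ind_mat_relcomp) blast
    also have "F O G = cell a \<times> cell c"
      unfolding 2(1) by (rule times_relcomp_bij_rel[OF 2(3)])
    finally show ?thesis
      using cell_times_cell_mem_tiling_span[OF assms(1,3)] by simp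
  next
    case 3
    then show ?thesis
      using mmult_bij_tile_mem_tiling_span assms(1,3,5) by blast
  qed
qed

lemma mmult_tiles_mem_tiling_span:
  assumes "F \<in> tiling" "G \<in> tiling"
  shows "(mmult (ind_mat F) (ind_mat G) :: 'x \<Rightarrow> 'x \<Rightarrow> 'f::field) \<in> tiling_span"
proof -
  obtain a b b' c where ab: "a \<le> d" "b \<le> d" "F \<in> tiles a b" and bc: "b' \<le> d" "c \<le> d" "G \<in> tiles b' c"
    using assms unfolding tiling_def by blast
  show ?thesis
  proof (cases "b = b'")
    case True
    with ab bc show ?thesis
      using mmult_tiles_same_cell_mem_tiling_span by blast
  next
    case False
    have "mmult (ind_mat F) (ind_mat G) = (ind_mat (F O G) :: 'x \<Rightarrow> 'x \<Rightarrow> 'f)"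
      using tile_subset[OF ab(3)] tile_subset[OF bc(3)] cell_unique[OF ab(2) bc(1)] False
      by (intro mmult_ind_mat_relcomp) blast
    also have "F O G = {}"
      using tile_subset[OF ab(3)] tile_subset[OF bc(3)] cell_unique[OF ab(2) bc(1)] False by blast
    finally show ?thesis
      by (simp only: ind_mat_empty mspace.span_zero)
  qed
qed

lemma T_subset_tiling_span: "(M :: 'x \<Rightarrow> 'x \<Rightarrow> 'f::field) \<in> T \<Longrightarrow> M \<in> tiling_span"
  unfolding terwilliger_def
proof (induction rule: gen_alg.induct)
  case (gen M)
  then show ?case
    using adj_mat_mem_tiling_span dual_idem_mem_tiling_span by blast
next
  case one
  have "(\<lambda>i j. if i = j then 1 else 0) = (adj_mat R 0 :: 'x \<Rightarrow> 'x \<Rightarrow> 'f)"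
    unfolding adj_mat_def R_0 by simp
  then show ?case
    using adj_mat_mem_tiling_span[of 0] by simp
next
  case (add M N)
  show ?case
    by (rule mspace.span_add[OF add.IH])
next
  case (scale M c)
  show ?case
    by (rule mspace.span_scale[OF scale.IH])
next
  case (mult M N)
  show ?case
    by (rule mmult_mem_span[OF _ mult.IH]) (auto intro: mmult_tiles_mem_tiling_span)
qed

lemma tiling_span_eq_T: "tiling_span = T"
  using tile_mem_T T_subset_tiling_span subspace_T by (intro mspace.span_subspace) auto

lemma dim_T: "fdim T = card tiling"
  unfolding fdim_eq_dim tiling_span_eq_T[symmetric]
  by (rule dim_span_ind_mat[OF tiling_disjoint empty_notin_tiling])

end

theorem theoremA:
  fixes R :: "nat \<Rightarrow> ('x::finite \<times> 'x) set" and d :: nat and x :: 'x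
  assumes "is_scheme R d" and "quasi_thin R d"
  shows "fdim (terwilliger R d x :: ('x \<Rightarrow> 'x \<Rightarrow> 'f::field) set)
         = (d + 1)^2
           + card {(a, b). a \<le> d \<and> b \<le> d \<and> card (cprod R d (conv_idx R d a) b) = 2}
           + card {(c, e). c \<le> d \<and> e \<le> d \<and> bad_pair R d c e}"
proof -
  interpret quasi_thin_scheme R d x
    using assms by unfold_locales
  have "fdim (terwilliger R d x :: ('x \<Rightarrow> 'x \<Rightarrow> 'f) set) = card tiling"
    by (rule dim_T)
  then show ?thesis
    using card_tiling card_thin_step_tranclp by (simp add: add.assoc)
qed

end
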